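(* Let $x=[x_1^T~x_2^T]^T$ with $x_1\in\mathbb C^n$, $x_2\in\mathbb C^m$; let $y,z\in\mathbb C^n$; and let $w=[w_1^T~w_2^T]^T$ with $w_1\in\mathbb C^n$, $w_2\in\mathbb C^m$. Define \[ \mathcal S_d^{\mathrm{Sym}}:=\{\Delta=[\Delta_1~\Delta_2]:\ \Delta_1\in\mathbb C^{n,n},\ \Delta_2\in\mathbb C^{n,m},\ \Delta_1^T=\Delta_1,\ \Delta x=y,\ \Delta^*z=w\}. \] Then $\mathcal S_d^{\mathrm{Sym}}\neq\emptyset$ if and only if $x^*w=y^*z$. If this holds, then \[ \mathcal S_d^{\mathrm{Sym}}=\{H+\widetilde H(K,R):\ K\in\mathbb C^{n,n},\ K^T=K,\ R\in\mathbb C^{n,m}\}, \] where $H=[H_1~H_2]$, $\widetilde H(K,R)=[\widetilde H_1(K)~\widetilde H_2(K,R)]$ with \begin{align*} H_1&=\bar w_1\bar z^\dagger+(\bar w_1\bar z^\dagger)^T-(\bar z^\dagger)^T\bar z^T\bar w_1\bar z^\dagger,\\ H_2&=yx_2^\dagger-H_1x_1x_2^\dagger+(w_2z^\dagger)^*\mathcal P_{x_2},\\ \widetilde H_1(K)&=(\mathcal P_{\bar z})^TK\mathcal P_{\bar z},\\ \widetilde H_2(K,R)&=\mathcal P_zR\mathcal P_{x_2}-(\mathcal P_{\bar z})^TK\mathcal P_{\bar z}x_1x_2^\dagger, \end{align*} and \[ \inf_{\Delta\in\mathcal S_d^{\mathrm{Sym}}}\|\Delta\|_F^2\ \ge\ \|H_1\|_F^2+\inf_{K\in\mathbb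 C^{n,n},\,K^T=K}\|H_2+\widetilde H_2(K,0)\|_F^2 . \] Moreover, if $x_1=\alpha\bar z$ for some nonzero $\alpha\in\mathbb C$, then equality holds and $\inf_{\Delta\in\mathcal S_d^{\mathrm{Sym}}}\|\Delta\|_F^2=\|H_1\|_F^2+\|H_2\|_F^2$, the infimum being uniquely attained by $H$.
   Context: $\bar v$ denotes entrywise complex conjugation. $A^\dagger$ is the Moore–Penrose pseudoinverse; for a vector $v$, $v^\dagger=v^*/\|v\|^2$ if $v\ne0$ and $0$ if $v=0$. For a matrix or vector $X$ with $n$ rows, $\mathcal P_X=I-XX^\dagger$. $\|\cdot\|_F$ is the Frobenius norm. *)

theory Defs
  imports "HOL-Analysis.Analysis"
begin

text \<open>Matrices with r rows and c columns have type complex^'c^'r.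
  The Frobenius norm of a matrix is the library norm on complex^'c^'r (Euclidean norm
  of all entries).\<close>

definition cconj :: "complex^'n \<Rightarrow> complex^'n" where
  "cconj v = (\<chi> i. cnj (v $ i))"

definition colm :: "complex^'n \<Rightarrow> complex^1^'n" where
  "colm v = (\<chi> i j. v $ i)"

definition ctrans :: "complex^'c^'r \<Rightarrow> complex^'r^'c" where
  "ctrans A = (\<chi> i j. cnj (A $ j $ i))"

definition vdag :: "complex^'n \<Rightarrow> complex^'n^1" where
  "vdag v = (if v = 0 then 0 else (\<chi> i j. cnj (v $ j) / complex_of_real ((norm v)\<^sup>2)))"

definition Pr :: "complex^'n \<Rightarrow> complex^'n^'n" where
  "Pr v = mat 1 - colm v ** vdag v"

definition cip :: "complex^'n \<Rightarrow> complex^'n \<Rightarrow> complex" where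
  "cip a b = (\<Sum>i\<in>UNIV. cnj (a $ i) * b $ i)"

text \<open>The set S_d^Sym; a matrix Delta = [Delta1 Delta2] is represented by the pair of blocks.\<close>
definition Ssym :: "complex^'n \<Rightarrow> complex^'m \<Rightarrow> complex^'n \<Rightarrow> complex^'n \<Rightarrow> complex^'n
    \<Rightarrow> complex^'m \<Rightarrow> ((complex^'n^'n) \<times> (complex^'m^'n)) set" where
  "Ssym x1 x2 y z w1 w2 = {(D1, D2). transpose D1 = D1 \<and> D1 *v x1 + D2 *v x2 = y
      \<and> ctrans D1 *v z = w1 \<and> ctrans D2 *v z = w2}"

definition frob2 :: "(complex^'n^'k) \<times> (complex^'m^'k) \<Rightarrow> real" where
  "frob2 D = (norm (fst D))\<^sup>2 + (norm (snd D))\<^sup>2"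

definition H1 :: "complex^'n \<Rightarrow> complex^'n \<Rightarrow> complex^'n^'n" where
  "H1 z w1 = colm (cconj w1) ** vdag (cconj z) + transpose (colm (cconj w1) ** vdag (cconj z))
     - transpose (vdag (cconj z)) ** transpose (colm (cconj z)) ** colm (cconj w1) ** vdag (cconj z)"

definition H2 :: "complex^'n \<Rightarrow> complex^'m \<Rightarrow> complex^'n \<Rightarrow> complex^'n \<Rightarrow> complex^'n
    \<Rightarrow> complex^'m \<Rightarrow> complex^'m^'n" where
  "H2 x1 x2 y z w1 w2 = colm y ** vdag x2 - H1 z w1 ** colm x1 ** vdag x2
     + ctrans (colm w2 ** vdag z) ** Pr x2"

definition Ht1 :: "complex^'n \<Rightarrow> complex^'n^'n \<Rightarrow> complex^'n^'n" where
  "Ht1 z K = transpose (Pr (cconj z)) ** K ** Pr (cconj z)"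

definition Ht2 :: "complex^'n \<Rightarrow> complex^'m \<Rightarrow> complex^'n \<Rightarrow> complex^'n^'n \<Rightarrow> complex^'m^'n
    \<Rightarrow> complex^'m^'n" where
  "Ht2 x1 x2 z K R = Pr z ** R ** Pr x2
     - transpose (Pr (cconj z)) ** K ** Pr (cconj z) ** colm x1 ** vdag x2"

end

theory Submission
  imports Defs
begin

text \<open>Write z' for the conjugate of z and P for P_z'. Every \<Delta> = [\<Delta>1 \<Delta>2] in the solution
  set differs from H = [H1 H2] in the first block by a symmetric K with K z' = 0, i.e.
  K = P^T K P, and, once \<Delta>1 is fixed, in the second block by some R with R x2 = 0 and
  z^* R = 0, i.e. R = P_z R P_x2. Since P^T H1 P = 0 and P_z (H2 + Ht2(K,0)) P_x2 = 0, the four terms H1,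
  Ht1(K), H2 + Ht2(K,0) and P_z R P_x2 are orthogonal in the Frobenius inner product, so
  the squared norm of \<Delta> is the sum of their squared norms. If x1 is a multiple of z', then
  Ht2(K,0) = 0 and the norm is minimal exactly when Ht1(K) = 0 and P_z R P_x2 = 0.\<close>

definition bilin :: "complex^'n \<Rightarrow> complex^'n \<Rightarrow> complex" where
  "bilin a b = (\<Sum>i\<in>UNIV. a $ i * b $ i)"

abbreviation cnorm2 :: "complex^'n \<Rightarrow> complex" where
  "cnorm2 v \<equiv> of_real ((norm v)\<^sup>2)"

lemma cconj_nth [simp]: "cconj v $ i = cnj (v $ i)"
  by (simp add: cconj_def)

lemma cconj_cconj [simp]: "cconj (cconj v) = v"
  by (simp add: vec_eq_iff)

lemma cconj_add [simp]: "cconj (a + b) = cconj a + cconj b"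
  by (simp add: vec_eq_iff)

lemma cconj_diff [simp]: "cconj (a - b) = cconj a - cconj b"
  by (simp add: vec_eq_iff)

lemma cconj_0 [simp]: "cconj 0 = 0"
  by (simp add: vec_eq_iff)

lemma cconj_eq_0_iff [simp]: "cconj a = 0 \<longleftrightarrow> a = 0"
  by (simp add: vec_eq_iff)

lemma norm_cconj [simp]: "norm (cconj v) = norm v"
  by (simp add: norm_vec_def)

lemma power2_norm_vec: "(norm (v::'a::real_normed_vector^'n))\<^sup>2 = (\<Sum>i\<in>UNIV. (norm (v$i))\<^sup>2)"
  by (simp add: norm_vec_def L2_set_def sum_nonneg)

lemma cnj_mult_self: "cnj a * a = complex_of_real ((cmod a)\<^sup>2)"
  using complex_norm_square[of a] by (simp add: mult.commute)

lemma cip_self: "cip v v = cnorm2 v"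
proof -
  have "cip v v = (\<Sum>i\<in>UNIV. of_real ((cmod (v$i))\<^sup>2))"
    unfolding cip_def by (intro sum.cong refl) (rule cnj_mult_self)
  also have "\<dots> = cnorm2 v" by (simp add: power2_norm_vec)
  finally show ?thesis .
qed

lemma bilin_cconj_right [simp]: "bilin a (cconj b) = cip b a"
  by (simp add: cip_def bilin_def mult.commute)

lemma bilin_cconj_left [simp]: "bilin (cconj a) b = cip a b"
  by (simp add: cip_def bilin_def)

lemma cip_cconj_left [simp]: "cip (cconj a) b = bilin a b"
  by (simp add: cip_def bilin_def)

lemma cip_cconj_right [simp]: "cip a (cconj b) = cnj (bilin a b)"
  by (simp add: cip_def bilin_def)

lemma bilin_commute: "bilin a b = bilin b a"
  by (simp add: bilin_def mult.commute)

lemma cnj_cip: "cnj (cip a b) = cip b a"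
  by (simp add: cip_def mult.commute)

lemma cip_add_left [simp]: "cip (a + b) c = cip a c + cip b c"
  by (simp add: cip_def sum.distrib algebra_simps)

lemma cip_add_right [simp]: "cip c (a + b) = cip c a + cip c b"
  by (simp add: cip_def sum.distrib algebra_simps)

lemma cip_diff_left [simp]: "cip (a - b) c = cip a c - cip b c"
  by (simp add: cip_def sum_subtractf algebra_simps)

lemma cip_diff_right [simp]: "cip c (a - b) = cip c a - cip c b"
  by (simp add: cip_def sum_subtractf algebra_simps)

lemma cip_scaleC_left [simp]: "cip (s *s a) c = cnj s * cip a c"
  by (simp add: cip_def sum_distrib_left algebra_simps)

lemma cip_scaleC_right [simp]: "cip c (s *s a) = s * cip c a"
  by (simp add: cip_def sum_distrib_left algebra_simps)

lemma cip_zero [simp]: "cip 0 c = 0" "cip c 0 = 0"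
  by (simp_all add: cip_def)

lemma bilin_add_left [simp]: "bilin (a + b) c = bilin a c + bilin b c"
  by (simp add: bilin_def sum.distrib algebra_simps)

lemma bilin_add_right [simp]: "bilin c (a + b) = bilin c a + bilin c b"
  by (simp add: bilin_def sum.distrib algebra_simps)

lemma bilin_diff_left [simp]: "bilin (a - b) c = bilin a c - bilin b c"
  by (simp add: bilin_def sum_subtractf algebra_simps)

lemma bilin_diff_right [simp]: "bilin c (a - b) = bilin c a - bilin c b"
  by (simp add: bilin_def sum_subtractf algebra_simps)

lemma bilin_scaleC_left [simp]: "bilin (s *s a) c = s * bilin a c"
  by (simp add: bilin_def sum_distrib_left algebra_simps)

lemma bilin_scaleC_right [simp]: "bilin c (s *s a) = s * bilin c a"
  by (simp add: bilin_def sum_distrib_left algebra_simps)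

lemma bilin_zero [simp]: "bilin 0 c = 0" "bilin c 0 = 0"
  by (simp_all add: bilin_def)

lemma ctrans_matrix_vector: "ctrans A *v z = cconj (cconj z v* A)"
  by (simp add: vec_eq_iff matrix_vector_mult_def vector_matrix_mult_def ctrans_def mult.commute)

lemma cip_matrix_vector_right: "cip z (A *v x) = cip (ctrans A *v z) x"
  unfolding cip_def matrix_vector_mult_def ctrans_def
  by (simp add: sum_distrib_left sum_distrib_right algebra_simps) (rule sum.swap)

lemma cip_matrix_vector_left: "cip (A *v x) z = cip x (ctrans A *v z)"
proof -
  have "cip (A *v x) z = cnj (cip z (A *v x))" by (simp add: cnj_cip)
  also have "\<dots> = cnj (cip (ctrans A *v z) x)" by (simp only: cip_matrix_vector_right)
  also have "\<dots> = cip x (ctrans A *v z)" by (simp add: cnj_cip)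
  finally show ?thesis .
qed

lemma matrix_add_rdistrib: "(A + B) ** C = A ** C + B ** (C::'a::semiring_1^_^_)"
  by (simp add: matrix_matrix_mult_def vec_eq_iff sum.distrib distrib_right)

lemma matrix_diff_rdistrib: "(A - B) ** C = A ** C - B ** (C::'a::ring_1^_^_)"
  by (simp add: matrix_matrix_mult_def vec_eq_iff sum_subtractf left_diff_distrib)

lemma matrix_vector_mult_uminus_left: "(- A) *v x = - (A *v (x::'a::ring_1^_))"
  by (simp add: vec_eq_iff matrix_vector_mult_def sum_negf)

lemma vector_matrix_transpose: "x v* transpose A = A *v (x::'a::comm_semiring_1^_)"
  using transpose_matrix_vector[of "transpose A" x] by simp

lemma transpose_add: "transpose (A + B) = transpose A + transpose B"
  by (simp add: transpose_def vec_eq_iff)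

lemma transpose_diff: "transpose (A - B) = transpose A - transpose B"
  by (simp add: transpose_def vec_eq_iff)

lemma transpose_zero [simp]: "transpose (0::'a::zero^'n^'m) = 0"
  by (simp add: transpose_def vec_eq_iff)

subsection \<open>Rank-one matrices and the projectors P_b\<close>

lemma vdag_nth [simp]: "vdag b $ i $ j = cnj (b $ j) / cnorm2 b"
  by (simp add: vdag_def)

lemma colm_nth [simp]: "colm a $ i $ j = a $ i"
  by (simp add: colm_def)

lemma colm_matrix_vector [simp]: "colm a *v (s::complex^1) = s$1 *s a"
  by (simp add: vec_eq_iff matrix_vector_mult_def sum_1 mult.commute)

lemma vdag_matrix_vector [simp]: "vdag b *v x = (\<chi> _. cip b x / cnorm2 b)"
  by (simp add: vec_eq_iff matrix_vector_mult_def cip_def sum_divide_distrib)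

lemma Pr_matrix_vector [simp]: "Pr b *v x = x - (cip b x / cnorm2 b) *s b"
  unfolding Pr_def
  by (simp add: matrix_vector_mult_diff_rdistrib matrix_vector_mul_assoc[symmetric])

lemma ctrans_outer_matrix_vector [simp]:
  "ctrans (colm a ** vdag b) *v x = (cip a x / cnorm2 b) *s b"
  by (simp add: vec_eq_iff matrix_vector_mult_def matrix_matrix_mult_def ctrans_def cip_def
      sum_1 sum_divide_distrib sum_distrib_left algebra_simps)

lemma vector_matrix_colm [simp]: "x v* colm a = (\<chi> _. bilin x a)"
  by (simp add: vec_eq_iff vector_matrix_mult_def bilin_def)

lemma vector_matrix_vdag [simp]: "(s::complex^1) v* vdag b = (s$1 / cnorm2 b) *s cconj b"
  by (simp add: vec_eq_iff vector_matrix_mult_def sum_1)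

lemma vector_matrix_Pr [simp]: "x v* Pr b = x - (bilin x b / cnorm2 b) *s cconj b"
  unfolding Pr_def
  by (simp add: vector_matrix_mult_diff_rdistrib vector_matrix_mul_assoc[symmetric])

lemma vector_matrix_ctrans_outer [simp]:
  "x v* ctrans (colm a ** vdag b) = (bilin x b / cnorm2 b) *s cconj a"
  by (simp add: vec_eq_iff vector_matrix_mult_def matrix_matrix_mult_def ctrans_def bilin_def
      sum_1 sum_divide_distrib sum_distrib_left algebra_simps)

text \<open>With the rules above, an identity between products of rank-one matrices, projectors and
  vectors reduces, after testing on vectors (\<open>matrix_eq\<close>), to scalar field arithmetic.
  For that arithmetic the hypothesis \<open>b \<noteq> 0\<close> is best supplied as \<open>norm b \<noteq> 0\<close> with
  \<open>norm_eq_zero\<close> deleted; otherwise simp turns it into an unusable componentwise statement.\<close>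

lemmas matrix_vector_normalize = matrix_vector_mult_diff_rdistrib matrix_vector_mult_add_rdistrib
  matrix_vector_mul_assoc[symmetric] vector_matrix_mul_assoc[symmetric]
  vector_matrix_mult_add_rdistrib vector_matrix_mult_diff_rdistrib
  matrix_vector_right_distrib matrix_vector_mult_diff_distrib
  vector_matrix_left_distrib vector_matrix_mult_diff_distrib
  vector_scalar_commute scalar_vector_matrix_assoc matrix_vector_mult_uminus_left
  cip_self bilin_commute

lemma Pr_matrix_vector_self: "b \<noteq> 0 \<Longrightarrow> Pr b *v b = 0"
  by (simp add: cip_self)

lemma cconj_vector_matrix_Pr_self: "b \<noteq> 0 \<Longrightarrow> cconj b v* Pr b = 0"
  by (simp add: cip_self)

lemma vector_matrix_transpose_Pr_self: "b \<noteq> 0 \<Longrightarrow> b v* transpose (Pr b) = 0"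
  unfolding vector_matrix_transpose by (rule Pr_matrix_vector_self)

lemma vdag_matrix_vector_self: "b \<noteq> 0 \<Longrightarrow> vdag b *v b = (\<chi> _. 1)"
  by (simp add: cip_self)

lemma vdag_Pr: "b \<noteq> 0 \<Longrightarrow> vdag b ** Pr b = 0"
  unfolding matrix_eq
  by (simp add: matrix_vector_normalize vec_eq_iff field_simps power2_eq_square del: norm_eq_zero)

lemma Pr_ctrans_outer: "b \<noteq> 0 \<Longrightarrow> Pr b ** ctrans (colm a ** vdag b) = 0"
  unfolding matrix_eq
  by (simp add: matrix_vector_normalize vec_eq_iff field_simps power2_eq_square del: norm_eq_zero)

lemma Pr_idem: "Pr b ** Pr b = Pr b"
proof (cases "b = 0")
  case True
  then show ?thesis by (simp add: Pr_def vdag_def)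
next
  case False
  then show ?thesis
    unfolding matrix_eq
    by (simp add: matrix_vector_normalize vec_eq_iff field_simps power2_eq_square del: norm_eq_zero)
qed

lemma Pr_nth: "Pr b $ i $ j = (if i = j then 1 else 0) - b$i * cnj (b$j) / cnorm2 b"
  by (simp add: Pr_def mat_def matrix_matrix_mult_def sum_1)

lemma ctrans_Pr: "ctrans (Pr b) = Pr b"
  by (simp add: vec_eq_iff ctrans_def Pr_nth mult.commute)

lemma ctrans_transpose_Pr: "ctrans (transpose (Pr b)) = transpose (Pr b)"
  by (simp add: vec_eq_iff ctrans_def transpose_def Pr_nth mult.commute)

subsection \<open>The Frobenius inner product\<close>

definition frob_inner :: "complex^'c^'r \<Rightarrow> complex^'c^'r \<Rightarrow> complex" where
  "frob_inner A B = (\<Sum>i\<in>UNIV. \<Sum>j\<in>UNIV. cnj (A$i$j) * B$i$j)"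

lemma inner_eq_Re_frob_inner: "inner A B = Re (frob_inner A B)"
  by (simp add: frob_inner_def inner_vec_def inner_complex_def)

lemma norm_add_power2_frob_orthogonal:
  "frob_inner A B = 0 \<Longrightarrow> (norm (A + B))\<^sup>2 = (norm A)\<^sup>2 + (norm B)\<^sup>2"
  by (rule norm_add_Pythagorean) (simp add: orthogonal_def inner_eq_Re_frob_inner)

lemma frob_inner_mult_right: "frob_inner A (B ** C) = frob_inner (A ** ctrans C) B"
  unfolding frob_inner_def matrix_matrix_mult_def ctrans_def
  by (simp add: sum_distrib_left sum_distrib_right mult_ac) (rule sum.cong[OF refl], rule sum.swap)

lemma frob_inner_mult_left: "frob_inner A (B ** C) = frob_inner (ctrans B ** A) C"
proof -
  have "frob_inner A (B ** C) = (\<Sum>i\<in>UNIV. \<Sum>j\<in>UNIV. \<Sum>k\<in>UNIV. cnj (A$i$j) * (B$i$k * C$k$j))"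
    by (simp add: frob_inner_def matrix_matrix_mult_def sum_distrib_left)
  also have "\<dots> = (\<Sum>i\<in>UNIV. \<Sum>k\<in>UNIV. \<Sum>j\<in>UNIV. cnj (A$i$j) * (B$i$k * C$k$j))"
    by (rule sum.cong[OF refl], rule sum.swap)
  also have "\<dots> = (\<Sum>k\<in>UNIV. \<Sum>i\<in>UNIV. \<Sum>j\<in>UNIV. cnj (A$i$j) * (B$i$k * C$k$j))"
    by (rule sum.swap)
  also have "\<dots> = (\<Sum>k\<in>UNIV. \<Sum>j\<in>UNIV. \<Sum>i\<in>UNIV. cnj (A$i$j) * (B$i$k * C$k$j))"
    by (rule sum.cong[OF refl], rule sum.swap)
  also have "\<dots> = frob_inner (ctrans B ** A) C"
    by (simp add: frob_inner_def matrix_matrix_mult_def ctrans_def sum_distrib_left cnj_sum mult_ac)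
  finally show ?thesis .
qed

lemma frob_inner_sandwich: "frob_inner A (P ** B ** Q) = frob_inner (ctrans P ** A ** ctrans Q) B"
  by (subst frob_inner_mult_right, subst frob_inner_mult_left) (simp add: matrix_mul_assoc)

lemma H1_symmetric: "transpose (H1 z w1) = H1 z w1"
  unfolding H1_def matrix_eq
  by (simp add: matrix_vector_normalize vec_eq_iff field_simps power2_eq_square)

lemma H1_matrix_vector_cconj: "z \<noteq> 0 \<Longrightarrow> H1 z w1 *v cconj z = cconj w1"
  unfolding H1_def by (simp add: matrix_vector_normalize vec_eq_iff field_simps power2_eq_square)

lemma cconj_vector_matrix_H1: "z \<noteq> 0 \<Longrightarrow> cconj z v* H1 z w1 = cconj w1"
  using vector_matrix_transpose[of "cconj z" "H1 z w1"]
  by (simp add: H1_symmetric H1_matrix_vector_cconj)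

lemma Pr_H1_Pr: "z \<noteq> 0 \<Longrightarrow> transpose (Pr (cconj z)) ** H1 z w1 ** Pr (cconj z) = 0"
  unfolding H1_def matrix_eq
  by (simp add: matrix_vector_normalize vec_eq_iff field_simps power2_eq_square)

lemma Ht1_symmetric: "transpose K = K \<Longrightarrow> transpose (Ht1 z K) = Ht1 z K"
  unfolding Ht1_def by (simp add: matrix_transpose_mul matrix_mul_assoc)

lemma cconj_vector_matrix_Ht1:
  assumes "z \<noteq> 0" shows "cconj z v* Ht1 z K = 0"
proof -
  have "cconj z v* transpose (Pr (cconj z)) = 0"
    by (rule vector_matrix_transpose_Pr_self) (use assms in simp)
  then show ?thesis
    unfolding Ht1_def by (simp only: vector_matrix_mul_assoc[symmetric] vector_matrix_mult_0)
qed

lemma Ht1_fixes_annihilator: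
  assumes "z \<noteq> 0" and "cconj z v* K = 0" and "K *v cconj z = 0"
  shows "Ht1 z K = K"
proof -
  have "norm z \<noteq> 0" using assms(1) by simp
  then show ?thesis
    unfolding matrix_eq Ht1_def
    by (simp add: matrix_vector_normalize assms(2,3) cip_matrix_vector_right
        ctrans_matrix_vector vec_eq_iff del: norm_eq_zero)
qed

lemma H2_matrix_vector_x2:
  assumes "x2 \<noteq> 0" shows "H2 x1 x2 y z w1 w2 *v x2 = y - H1 z w1 *v x1"
  unfolding H2_def
  by (simp only: matrix_vector_normalize Pr_matrix_vector_self[OF assms]
      vdag_matrix_vector_self[OF assms]
      matrix_vector_mult_0_right colm_matrix_vector vec_lambda_beta vector_smult_lid diff_zero
      add_0_right)

lemma Ht2_matrix_vector_x2:
  assumes "x2 \<noteq> 0" shows "Ht2 x1 x2 z K R *v x2 = - (Ht1 z K *v x1)"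
  unfolding Ht2_def Ht1_def
  by (simp only: matrix_vector_normalize Pr_matrix_vector_self[OF assms]
      vdag_matrix_vector_self[OF assms]
      matrix_vector_mult_0_right colm_matrix_vector vec_lambda_beta vector_smult_lid diff_zero
      add_0_right) simp

lemma cconj_vector_matrix_Ht2:
  assumes "z \<noteq> 0" shows "cconj z v* Ht2 x1 x2 z K R = 0"
proof -
  have "cconj z v* transpose (Pr (cconj z)) = 0"
    by (rule vector_matrix_transpose_Pr_self) (use assms in simp)
  then show ?thesis
    unfolding Ht2_def
    by (simp only: vector_matrix_mul_assoc[symmetric] cconj_vector_matrix_Pr_self[OF assms]
        vector_matrix_mult_0 vector_matrix_mult_diff_rdistrib diff_zero)
qed

lemma cconj_vector_matrix_H2:
  assumes "z \<noteq> 0" and "x2 \<noteq> 0" and "cip x1 w1 + cip x2 w2 = cip y z"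
  shows "cconj z v* H2 x1 x2 y z w1 w2 = cconj w2"
proof -
  have C: "cip z y = cip w1 x1 + cip w2 x2"
    using arg_cong[OF assms(3), of cnj] by (simp add: cnj_cip)
  have "norm z \<noteq> 0" "norm x2 \<noteq> 0" using assms(1,2) by auto
  with C show ?thesis
    unfolding H2_def
    by (simp add: matrix_vector_normalize vec_eq_iff field_simps power2_eq_square
        cconj_vector_matrix_H1[OF assms(1)] del: norm_eq_zero)
qed

lemma Ht2_eq_projected_plus_Ht2_0: "Ht2 x1 x2 z K R = Pr z ** R ** Pr x2 + Ht2 x1 x2 z K 0"
  unfolding Ht2_def by simp

lemma Pr_H2_Ht2_Pr:
  assumes "z \<noteq> 0" and "x2 \<noteq> 0"
  shows "Pr z ** (H2 x1 x2 y z w1 w2 + Ht2 x1 x2 z K 0) ** Pr x2 = 0"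
proof -
  have "(H2 x1 x2 y z w1 w2 + Ht2 x1 x2 z K 0) ** Pr x2 = ctrans (colm w2 ** vdag z) ** Pr x2"
    unfolding H2_def Ht2_def
    by (simp add: matrix_add_rdistrib matrix_diff_rdistrib matrix_mul_assoc[symmetric]
        vdag_Pr[OF assms(2)] Pr_idem)
  then show ?thesis
    by (simp add: matrix_mul_assoc[symmetric] Pr_idem)
      (simp add: matrix_mul_assoc Pr_ctrans_outer[OF assms(1)])
qed

text \<open>The coupling term vanishes because P_z' z' = 0 for the conjugate z' of z; unlike in the
  theorem, \<alpha> = 0 is allowed.\<close>

lemma Ht2_0_eq_0_if_parallel:
  assumes "z \<noteq> 0" and "x1 = \<alpha> *s cconj z" shows "Ht2 x1 x2 z K 0 = 0"
proof -
  have "norm z \<noteq> 0" using assms(1) by simp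
  then show ?thesis
    unfolding matrix_eq Ht2_def assms(2)
    by (simp add: matrix_vector_normalize vec_eq_iff field_simps power2_eq_square
        del: norm_eq_zero)
qed

subsection \<open>Parametrization of the solution set\<close>

lemma param_in_Ssym:
  assumes "z \<noteq> 0" and "x2 \<noteq> 0" and "cip x1 w1 + cip x2 w2 = cip y z"
    and "transpose K = K"
  shows "(H1 z w1 + Ht1 z K, H2 x1 x2 y z w1 w2 + Ht2 x1 x2 z K R) \<in> Ssym x1 x2 y z w1 w2"
  unfolding Ssym_def
  using assms
  by (simp add: transpose_add H1_symmetric Ht1_symmetric matrix_vector_mult_add_rdistrib
      H2_matrix_vector_x2 Ht2_matrix_vector_x2 ctrans_matrix_vector vector_matrix_mult_add_rdistrib
      cconj_vector_matrix_H1 cconj_vector_matrix_Ht1 cconj_vector_matrix_H2 cconj_vector_matrix_Ht2)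

lemma Ssym_imp_param:
  assumes z: "z \<noteq> 0" and x2: "x2 \<noteq> 0" and C: "cip x1 w1 + cip x2 w2 = cip y z"
    and "D \<in> Ssym x1 x2 y z w1 w2"
  obtains K R where "transpose K = K"
    and "D = (H1 z w1 + Ht1 z K, H2 x1 x2 y z w1 w2 + Ht2 x1 x2 z K R)"
proof -
  obtain D1 D2 where D: "D = (D1, D2)"
    by fastforce
  from assms(4) have sym: "transpose D1 = D1" and eq1: "D1 *v x1 + D2 *v x2 = y"
    and eq2: "cconj z v* D1 = cconj w1" and eq3: "cconj z v* D2 = cconj w2"
    by (auto simp: D Ssym_def ctrans_matrix_vector)
  define K where "K = D1 - H1 z w1"
  have K_sym: "transpose K = K"
    using sym by (simp add: K_def transpose_diff H1_symmetric)
  have zK: "cconj z v* K = 0"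
    by (simp add: K_def vector_matrix_mult_diff_rdistrib eq2 cconj_vector_matrix_H1[OF z])
  then have "K *v cconj z = 0"
    using vector_matrix_transpose[of "cconj z" K] K_sym by simp
  with z zK have K: "Ht1 z K = K"
    by (rule Ht1_fixes_annihilator)
  define R where "R = D2 - H2 x1 x2 y z w1 w2 - Ht2 x1 x2 z K 0"
  have "D2 *v x2 = y - D1 *v x1"
    using eq1 by (simp add: algebra_simps)
  then have "R *v x2 = (y - D1 *v x1) - (y - H1 z w1 *v x1) + K *v x1"
    by (simp add: R_def matrix_vector_mult_diff_rdistrib H2_matrix_vector_x2[OF x2]
        Ht2_matrix_vector_x2[OF x2] K)
  also have "\<dots> = (H1 z w1 + K - D1) *v x1"
    by (simp add: algebra_simps)
  finally have Rx2: "R *v x2 = 0"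
    by (simp add: K_def)
  have zR: "cconj z v* R = 0"
    by (simp add: R_def vector_matrix_mult_diff_rdistrib eq3 cconj_vector_matrix_H2[OF z x2 C]
        cconj_vector_matrix_Ht2[OF z])
  have "norm z \<noteq> 0" "norm x2 \<noteq> 0"
    using z x2 by auto
  then have "Pr z ** R ** Pr x2 = R"
    unfolding matrix_eq
    by (simp add: matrix_vector_normalize Rx2 zR cip_matrix_vector_right ctrans_matrix_vector
        vec_eq_iff del: norm_eq_zero)
  then have "D2 = H2 x1 x2 y z w1 w2 + Ht2 x1 x2 z K R"
    by (subst Ht2_eq_projected_plus_Ht2_0) (simp add: R_def)
  moreover have "D1 = H1 z w1 + Ht1 z K"
    by (simp only: K) (simp add: K_def)
  ultimately show thesis
    using that[OF K_sym] by (simp add: D)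
qed

lemma Ssym_eq_param:
  assumes "z \<noteq> 0" and "x2 \<noteq> 0" and "cip x1 w1 + cip x2 w2 = cip y z"
  shows "Ssym x1 x2 y z w1 w2 =
    {(H1 z w1 + Ht1 z K, H2 x1 x2 y z w1 w2 + Ht2 x1 x2 z K R) | K R. transpose K = K}"
proof (intro set_eqI iffI)
  fix D assume "D \<in> Ssym x1 x2 y z w1 w2"
  then obtain K R where "transpose K = K"
    and "D = (H1 z w1 + Ht1 z K, H2 x1 x2 y z w1 w2 + Ht2 x1 x2 z K R)"
    by (rule Ssym_imp_param[OF assms])
  then show "D \<in> {(H1 z w1 + Ht1 z K, H2 x1 x2 y z w1 w2 + Ht2 x1 x2 z K R) | K R. transpose K = K}"
    by blast
qed (use param_in_Ssym[OF assms] in blast)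

lemma Ssym_nonempty_iff:
  assumes "z \<noteq> 0" and "x2 \<noteq> 0"
  shows "Ssym x1 x2 y z w1 w2 \<noteq> {} \<longleftrightarrow> cip x1 w1 + cip x2 w2 = cip y z"
proof
  assume "Ssym x1 x2 y z w1 w2 \<noteq> {}"
  then obtain D1 D2 where "D1 *v x1 + D2 *v x2 = y" "ctrans D1 *v z = w1" "ctrans D2 *v z = w2"
    by (auto simp: Ssym_def)
  then show "cip x1 w1 + cip x2 w2 = cip y z"
    by (auto simp: cip_matrix_vector_left)
next
  assume "cip x1 w1 + cip x2 w2 = cip y z"
  from param_in_Ssym[OF assms this, of 0 0] show "Ssym x1 x2 y z w1 w2 \<noteq> {}"
    by auto
qed

subsection \<open>The norm of a solution\<close>

lemma frob2_param:
  assumes "z \<noteq> 0" and "x2 \<noteq> 0"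
  shows "frob2 (H1 z w1 + Ht1 z K, H2 x1 x2 y z w1 w2 + Ht2 x1 x2 z K R)
    = (norm (H1 z w1))\<^sup>2 + (norm (Ht1 z K))\<^sup>2 + (norm (H2 x1 x2 y z w1 w2 + Ht2 x1 x2 z K 0))\<^sup>2
      + (norm (Pr z ** R ** Pr x2))\<^sup>2"
proof -
  have "frob_inner (H1 z w1) (Ht1 z K) = 0"
    unfolding Ht1_def frob_inner_sandwich ctrans_Pr ctrans_transpose_Pr Pr_H1_Pr[OF assms(1)]
    by (simp add: frob_inner_def)
  then have first: "(norm (H1 z w1 + Ht1 z K))\<^sup>2 = (norm (H1 z w1))\<^sup>2 + (norm (Ht1 z K))\<^sup>2"
    by (rule norm_add_power2_frob_orthogonal)
  have "frob_inner (H2 x1 x2 y z w1 w2 + Ht2 x1 x2 z K 0) (Pr z ** R ** Pr x2) = 0"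
    unfolding frob_inner_sandwich ctrans_Pr Pr_H2_Ht2_Pr[OF assms] by (simp add: frob_inner_def)
  moreover have "H2 x1 x2 y z w1 w2 + Ht2 x1 x2 z K R
      = (H2 x1 x2 y z w1 w2 + Ht2 x1 x2 z K 0) + Pr z ** R ** Pr x2"
    by (subst Ht2_eq_projected_plus_Ht2_0) (simp add: algebra_simps)
  ultimately have "(norm (H2 x1 x2 y z w1 w2 + Ht2 x1 x2 z K R))\<^sup>2
      = (norm (H2 x1 x2 y z w1 w2 + Ht2 x1 x2 z K 0))\<^sup>2 + (norm (Pr z ** R ** Pr x2))\<^sup>2"
    by (simp only: norm_add_power2_frob_orthogonal)
  with first show ?thesis
    unfolding frob2_def by simp
qed

lemma Inf_frob2_Ssym_ge:
  assumes "z \<noteq> 0" and "x2 \<noteq> 0" and "cip x1 w1 + cip x2 w2 = cip y z"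
  shows "Inf (frob2 ` Ssym x1 x2 y z w1 w2) \<ge> (norm (H1 z w1))\<^sup>2
    + Inf {(norm (H2 x1 x2 y z w1 w2 + Ht2 x1 x2 z K 0))\<^sup>2 | K. transpose K = K}"
    (is "_ \<ge> _ + Inf ?T")
proof (rule cInf_greatest)
  show "frob2 ` Ssym x1 x2 y z w1 w2 \<noteq> {}"
    using Ssym_nonempty_iff[OF assms(1,2)] assms(3) by blast
next
  have bdd: "bdd_below ?T"
    unfolding bdd_below_def by (intro exI[of _ 0]) auto
  fix d assume "d \<in> frob2 ` Ssym x1 x2 y z w1 w2"
  then obtain D where D: "D \<in> Ssym x1 x2 y z w1 w2" and d: "d = frob2 D"
    by blast
  obtain K R where K: "transpose K = K"
    and D_eq: "D = (H1 z w1 + Ht1 z K, H2 x1 x2 y z w1 w2 + Ht2 x1 x2 z K R)"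
    using D by (rule Ssym_imp_param[OF assms])
  have "Inf ?T \<le> (norm (H2 x1 x2 y z w1 w2 + Ht2 x1 x2 z K 0))\<^sup>2"
    by (rule cInf_lower[OF _ bdd]) (use K in auto)
  then show "(norm (H1 z w1))\<^sup>2 + Inf ?T \<le> d"
    unfolding d D_eq frob2_param[OF assms(1,2)] by (smt (verit) zero_le_power2)
qed

lemma frob2_Ssym_minimum:
  assumes "z \<noteq> 0" and "x2 \<noteq> 0" and "cip x1 w1 + cip x2 w2 = cip y z"
    and "x1 = \<alpha> *s cconj z" and "D \<in> Ssym x1 x2 y z w1 w2"
  shows "frob2 (H1 z w1, H2 x1 x2 y z w1 w2) \<le> frob2 D"
    and "frob2 D = frob2 (H1 z w1, H2 x1 x2 y z w1 w2) \<Longrightarrow> D = (H1 z w1, H2 x1 x2 y z w1 w2)"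
proof -
  obtain K R where "transpose K = K"
    and D: "D = (H1 z w1 + Ht1 z K, H2 x1 x2 y z w1 w2 + Ht2 x1 x2 z K R)"
    using assms(5) by (rule Ssym_imp_param[OF assms(1-3)])
  have Ht2_0: "Ht2 x1 x2 z K 0 = 0"
    using Ht2_0_eq_0_if_parallel[OF assms(1,4)] .
  have frob2_D: "frob2 D = frob2 (H1 z w1, H2 x1 x2 y z w1 w2)
      + (norm (Ht1 z K))\<^sup>2 + (norm (Pr z ** R ** Pr x2))\<^sup>2"
    unfolding D frob2_param[OF assms(1,2)] Ht2_0 by (simp add: frob2_def)
  then show "frob2 (H1 z w1, H2 x1 x2 y z w1 w2) \<le> frob2 D"
    by simp
  assume "frob2 D = frob2 (H1 z w1, H2 x1 x2 y z w1 w2)"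
  then have "(norm (Ht1 z K))\<^sup>2 + (norm (Pr z ** R ** Pr x2))\<^sup>2 = 0"
    using frob2_D by simp
  then have "Ht1 z K = 0" and "Pr z ** R ** Pr x2 = 0"
    by simp_all
  moreover have "Ht2 x1 x2 z K R = Pr z ** R ** Pr x2"
    using Ht2_eq_projected_plus_Ht2_0[of x1 x2 z K R] by (simp only: Ht2_0 add_0_right)
  ultimately show "D = (H1 z w1, H2 x1 x2 y z w1 w2)"
    unfolding D by simp
qed

theorem theorem3p4:
  fixes x1 y z w1 :: "complex^'n" and x2 w2 :: "complex^'m"
  assumes "x2 \<noteq> 0" and "z \<noteq> 0"
  defines "S \<equiv> Ssym x1 x2 y z w1 w2"
  shows "(S \<noteq> {} \<longleftrightarrow> cip x1 w1 + cip x2 w2 = cip y z)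
    \<and> (cip x1 w1 + cip x2 w2 = cip y z \<longrightarrow>
        S = {(H1 z w1 + Ht1 z K, H2 x1 x2 y z w1 w2 + Ht2 x1 x2 z K R) | K R.
               transpose K = K}
      \<and> Inf (frob2 ` S) \<ge> (norm (H1 z w1))\<^sup>2
            + Inf {(norm (H2 x1 x2 y z w1 w2 + Ht2 x1 x2 z K 0))\<^sup>2 | K. transpose K = K}
      \<and> (\<forall>\<alpha>::complex. \<alpha> \<noteq> 0 \<and> x1 = \<alpha> *s cconj z \<longrightarrow>
            Inf (frob2 ` S) = (norm (H1 z w1))\<^sup>2
              + Inf {(norm (H2 x1 x2 y z w1 w2 + Ht2 x1 x2 z K 0))\<^sup>2 | K. transpose K = K}
          \<and> Inf (frob2 ` S) = (norm (H1 z w1))\<^sup>2 + (norm (H2 x1 x2 y z w1 w2))\<^sup>2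
          \<and> (H1 z w1, H2 x1 x2 y z w1 w2) \<in> S
          \<and> frob2 (H1 z w1, H2 x1 x2 y z w1 w2) = Inf (frob2 ` S)
          \<and> (\<forall>D\<in>S. frob2 D = Inf (frob2 ` S) \<longrightarrow> D = (H1 z w1, H2 x1 x2 y z w1 w2))))"
proof (intro conjI impI allI ballI)
  note nz = assms(2,1)
  show "S \<noteq> {} \<longleftrightarrow> cip x1 w1 + cip x2 w2 = cip y z"
    unfolding S_def by (rule Ssym_nonempty_iff[OF nz])
  assume C: "cip x1 w1 + cip x2 w2 = cip y z"
  show "S = {(H1 z w1 + Ht1 z K, H2 x1 x2 y z w1 w2 + Ht2 x1 x2 z K R) | K R. transpose K = K}"
    unfolding S_def by (rule Ssym_eq_param[OF nz C])
  show "Inf (frob2 ` S) \<ge> (norm (H1 z w1))\<^sup>2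
      + Inf {(norm (H2 x1 x2 y z w1 w2 + Ht2 x1 x2 z K 0))\<^sup>2 | K. transpose K = K}"
    unfolding S_def by (rule Inf_frob2_Ssym_ge[OF nz C])
  fix \<alpha> :: complex
  assume "\<alpha> \<noteq> 0 \<and> x1 = \<alpha> *s cconj z"
  then have x1: "x1 = \<alpha> *s cconj z" by simp
  show H_in_S: "(H1 z w1, H2 x1 x2 y z w1 w2) \<in> S"
    using param_in_Ssym[OF nz C, of 0 0] by (simp add: S_def Ht1_def Ht2_def)
  have Inf_S: "Inf (frob2 ` S) = frob2 (H1 z w1, H2 x1 x2 y z w1 w2)"
    using H_in_S frob2_Ssym_minimum(1)[OF nz C x1] unfolding S_def
    by (intro cInf_eq_minimum) blast+
  then show "frob2 (H1 z w1, H2 x1 x2 y z w1 w2) = Inf (frob2 ` S)"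
    and "Inf (frob2 ` S) = (norm (H1 z w1))\<^sup>2 + (norm (H2 x1 x2 y z w1 w2))\<^sup>2"
    by (simp_all add: frob2_def)
  moreover have "{(norm (H2 x1 x2 y z w1 w2 + Ht2 x1 x2 z K 0))\<^sup>2 | K. transpose K = K}
      = {(norm (H2 x1 x2 y z w1 w2))\<^sup>2}"
    by (auto simp: Ht2_0_eq_0_if_parallel[OF assms(2) x1] intro: exI[of _ 0])
  ultimately show "Inf (frob2 ` S) = (norm (H1 z w1))\<^sup>2
      + Inf {(norm (H2 x1 x2 y z w1 w2 + Ht2 x1 x2 z K 0))\<^sup>2 | K. transpose K = K}"
    by simp
  show "D = (H1 z w1, H2 x1 x2 y z w1 w2)" if "D \<in> S" "frob2 D = Inf (frob2 ` S)" for D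
    using frob2_Ssym_minimum(2)[OF nz C x1] that Inf_S unfolding S_def by simp
qed

end
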